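(* The functional $\tilde J:\mathcal F\times[0,+\infty)\to\mathbb{R}$, $\tilde J(f,c)=\frac12c^3I_1(f)-\frac12c^2gAI_2(f)$, has a unique global minimum at $(\mathrm{id},\frac23gA)$, where $\mathrm{id}(y)=y$.
   Context: $g>0$, $A\in(0,1)$ constants. $\mathcal F$ is the set of $f\in\mathcal C^1([-1,1])$ with $f(\pm1)=\pm1$, $f'(\pm1)>0$, $f(y)\in(-1,1)$ and $f(-y)=-f(y)$ for $y\in(-1,1)$. For $f\in\mathcal F$ let $F(y):=\int_{-1}^yf'(s)s\,ds$, $I_1(f):=\int_0^1\frac{F(y)^2}{1-f(y)^2}\,dy$ and $I_2(f):=\int_0^1(1-f(y))y\,dy$. *)

theory Defs
  imports "HOL-Analysis.Analysis"
begin

definition fder :: "(real \<Rightarrow> real) \<Rightarrow> real \<Rightarrow> real" where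
  "fder f y = vector_derivative f (at y within {-1..1})"

definition C1_on_interval :: "(real \<Rightarrow> real) \<Rightarrow> bool" where
  "C1_on_interval f \<longleftrightarrow>
     (\<forall>y\<in>{-1..1}. f differentiable (at y within {-1..1})) \<and>
     continuous_on {-1..1} (fder f)"

definition FF :: "(real \<Rightarrow> real) set" where
  "FF = {f. C1_on_interval f \<and> f (-1) = -1 \<and> f 1 = 1 \<and> fder f (-1) > 0 \<and> fder f 1 > 0 \<and>
          (\<forall>y\<in>{-1<..<1}. f y \<in> {-1<..<1} \<and> f (-y) = - f y)}"

definition Fprim :: "(real \<Rightarrow> real) \<Rightarrow> real \<Rightarrow> real" where
  "Fprim f y = integral {-1..y} (\<lambda>s. fder f s * s)"

definition I1 :: "(real \<Rightarrow> real) \<Rightarrow> real" where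
  "I1 f = integral {0..1} (\<lambda>y. (Fprim f y)\<^sup>2 / (1 - (f y)\<^sup>2))"

definition I2 :: "(real \<Rightarrow> real) \<Rightarrow> real" where
  "I2 f = integral {0..1} (\<lambda>y. (1 - f y) * y)"

definition Jt :: "real \<Rightarrow> real \<Rightarrow> (real \<Rightarrow> real) \<Rightarrow> real \<Rightarrow> real" where
  "Jt g A f c = 1/2 * c^3 * I1 f - 1/2 * c^2 * g * A * I2 f"

end

theory Submission
  imports Defs
begin

text \<open>Write m = I2 f, P = I1 f, B = I0 f = int_0^1 (1 - f^2) and F = Fprim f. Two
integrations by parts give int_0^1 F = -2m, so Cauchy-Schwarz with the weight 1 - f^2 yields
4 m^2 <= P B. For every t > 0 one has pointwise 1 - f^2 <= (2/t) (1 - f) y + max(0, 1 - y/t)^2,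
hence B <= 2m/t + t/3, and optimising in t gives B^2 <= 8m/3. Together P^2 >= 6 m^3, and
equality forces equality in both steps, which only f = id achieves. Finally, once
P^2 >= 6 m^3, AM-GM shows c^3 P/2 - c^2 g A m/2 >= -(g A)^3/81 for c >= 0, with equality
only for P^2 = 6 m^3 and c = 2 g A/3.\<close>

lemma sq_le_4_mult_if_le_scaled_sum:
  fixes x u v :: real
  assumes "0 \<le> x" "0 \<le> u" "0 \<le> v" and le: "\<And>a. a > 0 \<Longrightarrow> x \<le> a * u + v / a"
  shows "x\<^sup>2 \<le> 4 * u * v"
proof (cases "x = 0")
  case True
  then show ?thesis using assms by simp
next
  case False
  then have x: "x > 0" using assms by simp
  show ?thesis
  proof (cases "u = 0")
    case True
    have "x \<le> v / (v / x + 1)" using le[of "v / x + 1"] True x assms by (simp add: add_nonneg_pos)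
    also have "\<dots> < x" using x assms by (simp add: field_simps)
    finally show ?thesis by simp
  next
    case False
    then have u: "u > 0" using assms by simp
    have "x \<le> x / 2 + 2 * u * v / x" using le[of "x / (2 * u)"] u x by (simp add: ac_simps)
    then show ?thesis using x by (simp add: field_simps power2_eq_square)
  qed
qed

lemma amgm_sq_cube:
  fixes y z :: real
  assumes "0 \<le> y" "0 \<le> z"
  shows "27 * y\<^sup>2 * z \<le> 4 * (y + z) ^ 3"
    and "27 * y\<^sup>2 * z = 4 * (y + z) ^ 3 \<Longrightarrow> y = 2 * z"
proof -
  have gap: "4 * (y + z) ^ 3 - 27 * y\<^sup>2 * z = (y - 2 * z)\<^sup>2 * (4 * y + z)"
    by (simp add: power2_eq_square power3_eq_cube algebra_simps)
  moreover have "0 \<le> (y - 2 * z)\<^sup>2 * (4 * y + z)" using assms by simp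
  ultimately show "27 * y\<^sup>2 * z \<le> 4 * (y + z) ^ 3" by linarith
  assume "27 * y\<^sup>2 * z = 4 * (y + z) ^ 3"
  then have "(y - 2 * z)\<^sup>2 * (4 * y + z) = 0" using gap by simp
  then show "y = 2 * z" using assms by auto
qed

lemma minus_2_mult_le_scaled_sum:
  fixes a p x :: real
  assumes "0 < p" "0 < a"
  shows "-2 * x \<le> a * (x\<^sup>2 / p) + p / a"
proof -
  have "0 \<le> (a * x + p)\<^sup>2 / (a * p)" using assms by simp
  also have "\<dots> = a * (x\<^sup>2 / p) + p / a + 2 * x"
    using assms by (simp add: field_simps power2_eq_square)
  finally show ?thesis by simp
qed

lemma has_integral_odd_0:
  fixes h :: "real \<Rightarrow> real"
  assumes "h integrable_on {-a..a}" and odd: "\<And>x. x \<in> {-a..a} \<Longrightarrow> h (-x) = - h x"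
  shows "(h has_integral 0) {-a..a}"
proof -
  have "integral {-a..a} h = integral {-a..a} (\<lambda>x. h (-x))"
    using Henstock_Kurzweil_Integration.integral_reflect_real[of a "-a" h] by simp
  also have "\<dots> = integral {-a..a} (\<lambda>x. - h x)"
    by (rule integral_cong) (use odd in auto)
  finally have "integral {-a..a} h = 0" by simp
  then show ?thesis using assms(1) by (metis has_integral_integrable_integral)
qed

lemma has_integral_real_derivative:
  fixes F F' :: "real \<Rightarrow> real"
  assumes "a \<le> b" "\<And>x. x \<in> {a..b} \<Longrightarrow> (F has_real_derivative F' x) (at x within {a..b})"
  shows "(F' has_integral (F b - F a)) {a..b}"
  using assms by (intro fundamental_theorem_of_calculus) (auto simp: has_real_derivative_iff_has_vector_derivative)

lemma sq_div_one_minus_sq_le: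
  fixes G x :: real
  assumes "0 \<le> G" "G \<le> 1 - x" "-1 < x"
  shows "G\<^sup>2 / (1 - x\<^sup>2) \<le> (1 - x) / (1 + x)"
proof (cases "x = 1")
  case False
  then have "1 - x > 0" "1 + x > 0" using assms by auto
  moreover have "G\<^sup>2 \<le> (1 - x)\<^sup>2" using assms by (intro power_mono) auto
  moreover have "1 - x\<^sup>2 = (1 - x) * (1 + x)" by (simp add: power2_eq_square algebra_simps)
  ultimately have "G\<^sup>2 / (1 - x\<^sup>2) \<le> (1 - x)\<^sup>2 / ((1 - x) * (1 + x))"
    by (auto intro: divide_right_mono)
  also have "\<dots> = (1 - x) / (1 + x)" using \<open>1 - x > 0\<close> by (simp add: power2_eq_square)
  finally show ?thesis .
qed (use assms in simp)

text \<open>For fixed y, the maximum of (1 - x^2) - (2/t) (1 - x) y over -1 <= x <= 1 is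
max(0, 1 - y/t)^2, attained at x = min 1 (y/t).\<close>
lemma clip_gap_eq:
  fixes t x y :: real
  assumes "0 < t"
  shows "y \<le> t \<Longrightarrow> 2/t * ((1 - x) * y) + (max 0 (1 - y/t))\<^sup>2 - (1 - x\<^sup>2) = (x - y/t)\<^sup>2"
    and "t < y \<Longrightarrow> 2/t * ((1 - x) * y) + (max 0 (1 - y/t))\<^sup>2 - (1 - x\<^sup>2) = (1 - x) * (2 * y/t - 1 - x)"
  using assms by (auto simp: max_def field_simps power2_eq_square)

lemma clip_gap_nonneg:
  fixes t x y :: real
  assumes "0 < t" "\<bar>x\<bar> \<le> 1"
  shows "0 \<le> 2/t * ((1 - x) * y) + (max 0 (1 - y/t))\<^sup>2 - (1 - x\<^sup>2)"
proof (cases "y \<le> t")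
  case True
  then show ?thesis unfolding clip_gap_eq(1)[OF assms(1) True] by simp
next
  case False
  then have "t < y" by simp
  then have "2 < 2 * y/t" using assms by (simp add: field_simps)
  then show ?thesis unfolding clip_gap_eq(2)[OF assms(1) \<open>t < y\<close>] using assms(2) by (simp add: abs_le_iff)
qed

lemma clip_sq_has_integral:
  fixes t :: real
  assumes "0 < t"
  shows "((\<lambda>y. (max 0 (1 - y/t))\<^sup>2) has_integral (t/3 * (1 - (max 0 (1 - 1/t)) ^ 3))) {0..1}"
proof -
  have poly: "((\<lambda>y. (1 - y/t)\<^sup>2) has_integral (t/3 * (1 - (1 - b/t) ^ 3))) {0..b}" if "0 \<le> b" for b
  proof -
    have "((\<lambda>y. (1 - y/t)\<^sup>2) has_integral (- t/3 * (1 - b/t) ^ 3 - - t/3 * (1 - 0/t) ^ 3)) {0..b}"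
      using that assms
      by (intro has_integral_real_derivative)
        (auto intro!: derivative_eq_intros simp: power2_eq_square)
    then show ?thesis by (simp add: algebra_simps)
  qed
  have unclipped: "(max 0 (1 - y/t))\<^sup>2 = (1 - y/t)\<^sup>2" if "y \<le> t" for y
    using that assms by (simp add: field_simps)
  show ?thesis
  proof (cases "t \<le> 1")
    case True
    have "((\<lambda>y. (1 - y/t)\<^sup>2) has_integral (t/3)) {0..t}" using poly[of t] assms by simp
    then have left: "((\<lambda>y. (max 0 (1 - y/t))\<^sup>2) has_integral (t/3)) {0..t}"
      by (rule has_integral_eq[rotated]) (simp add: unclipped)
    have right: "((\<lambda>y. (max 0 (1 - y/t))\<^sup>2) has_integral 0) {t..1}"
      using assms by (intro has_integral_is_0) (simp add: field_simps)
    have "max 0 (1 - 1/t) = 0" using True assms by (simp add: field_simps)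
    then show ?thesis using has_integral_combine[OF _ True left right] assms by simp
  next
    case False
    then have "max 0 (1 - 1/t) = 1 - 1/t" by (simp add: field_simps)
    then have "((\<lambda>y. (1 - y/t)\<^sup>2) has_integral (t/3 * (1 - (max 0 (1 - 1/t)) ^ 3))) {0..1}"
      using poly[of 1] by simp
    then show ?thesis
      by (rule has_integral_eq[rotated]) (use False unclipped in simp)
  qed
qed

definition I0 :: "(real \<Rightarrow> real) \<Rightarrow> real" where
  "I0 f = integral {0..1} (\<lambda>y. 1 - (f y)\<^sup>2)"

context
  fixes f :: "real \<Rightarrow> real"
  assumes f: "f \<in> FF"
begin

lemma FF_has_derivative:
  assumes "y \<in> S" "S \<subseteq> {-1..1}"
  shows "(f has_real_derivative fder f y) (at y within S)"
proof -
  have "(f has_real_derivative fder f y) (at y within {-1..1})"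
    using f assms unfolding FF_def C1_on_interval_def fder_def
    by (auto simp: has_real_derivative_iff_has_vector_derivative vector_derivative_works[symmetric])
  then show ?thesis using assms(2) by (rule DERIV_subset)
qed

lemma FF_continuous_on: "continuous_on {-1..1} f"
  using FF_has_derivative by (meson DERIV_continuous continuous_on_eq_continuous_within order_refl)

lemma FF_fder_continuous_on: "continuous_on {-1..1} (fder f)"
  using f unfolding FF_def C1_on_interval_def by simp

lemma FF_endpoints: "f 1 = 1" "f (-1) = -1" "fder f 1 > 0"
  using f unfolding FF_def by auto

lemma FF_abs_less_1: "y \<in> {-1<..<1} \<Longrightarrow> \<bar>f y\<bar> < 1"
  using f unfolding FF_def by (auto simp: abs_less_iff)

lemma FF_abs_le_1: "y \<in> {-1..1} \<Longrightarrow> \<bar>f y\<bar> \<le> 1"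
  using FF_abs_less_1[of y] FF_endpoints by (cases "y = 1 \<or> y = -1") auto

lemma FF_odd: "y \<in> {-1..1} \<Longrightarrow> f (-y) = - f y"
  using f FF_endpoints unfolding FF_def by (cases "y = 1 \<or> y = -1") auto

lemma FF_has_integral_0: "(f has_integral 0) {-1..1}"
  using has_integral_odd_0[of f 1] integrable_continuous_interval[OF FF_continuous_on] FF_odd
  by simp

lemma Fprim_has_derivative:
  assumes "y \<in> S" "S \<subseteq> {-1..1}"
  shows "(Fprim f has_real_derivative (fder f y * y)) (at y within S)"
proof -
  have "continuous_on {-1..1} (\<lambda>s. fder f s * s)"
    using FF_fder_continuous_on by (intro continuous_intros)
  from integral_has_vector_derivative[OF this] assms
  have "(Fprim f has_real_derivative (fder f y * y)) (at y within {-1..1})"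
    unfolding Fprim_def has_real_derivative_iff_has_vector_derivative by auto
  then show ?thesis using assms(2) by (rule DERIV_subset)
qed

lemma Fprim_continuous_on: "continuous_on {-1..1} (Fprim f)"
  using Fprim_has_derivative by (meson DERIV_continuous continuous_on_eq_continuous_within order_refl)

lemma Fprim_1: "Fprim f 1 = 0"
proof -
  have "((\<lambda>s. f s + s * fder f s) has_integral (1 * f 1 - (-1) * f (-1))) {-1..1}"
    by (rule has_integral_real_derivative) (auto intro!: derivative_eq_intros FF_has_derivative)
  then have "((\<lambda>s. f s + s * fder f s) has_integral 0) {-1..1}"
    using FF_endpoints by simp
  from has_integral_diff[OF this FF_has_integral_0]
  have "((\<lambda>s. fder f s * s) has_integral 0) {-1..1}" by (simp add: mult.commute)
  then show ?thesis unfolding Fprim_def by (rule integral_unique)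
qed

lemma I2_has_integral: "((\<lambda>y. (1 - f y) * y) has_integral I2 f) {0..1}"
proof -
  have "continuous_on {0..1} (\<lambda>y. (1 - f y) * y)"
    by (intro continuous_intros continuous_on_subset[OF FF_continuous_on]) auto
  then show ?thesis
    unfolding I2_def by (simp add: integrable_continuous_interval has_integral_integrable_integral)
qed

text \<open>Integration by parts twice, using F(1) = 0.\<close>
lemma Fprim_has_integral: "(Fprim f has_integral (- 2 * I2 f)) {0..1}"
proof -
  have F: "((\<lambda>y. Fprim f y + y * (fder f y * y)) has_integral (1 * Fprim f 1 - 0 * Fprim f 0)) {0..1}"
    by (rule has_integral_real_derivative) (auto intro!: derivative_eq_intros Fprim_has_derivative)
  have f: "((\<lambda>y. 2 * y * f y + y\<^sup>2 * fder f y) has_integral (1\<^sup>2 * f 1 - 0\<^sup>2 * f 0)) {0..1}"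
    by (rule has_integral_real_derivative) (auto intro!: derivative_eq_intros FF_has_derivative)
  have y: "((\<lambda>y. y) has_integral (1/2)) {0..(1::real)}"
    using ident_has_integral[of 0 "1::real"] by simp
  have "((\<lambda>y. (Fprim f y + y * (fder f y * y)) - (2 * y * f y + y\<^sup>2 * fder f y) + 2 * y
      - 2 * ((1 - f y) * y)) has_integral
      ((1 * Fprim f 1 - 0 * Fprim f 0) - (1\<^sup>2 * f 1 - 0\<^sup>2 * f 0) + 2 * (1/2) - 2 * I2 f)) {0..1}"
    by (intro has_integral_diff has_integral_add has_integral_mult_right F f y I2_has_integral)
  then show ?thesis using Fprim_1 FF_endpoints
    by (simp add: algebra_simps power2_eq_square)
qed

lemma Fprim_tail_has_integral:
  assumes "y \<in> {-1..1}"
  shows "((\<lambda>s. fder f s * s) has_integral - Fprim f y) {y..1}"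
proof -
  have "((\<lambda>s. fder f s * s) has_integral (Fprim f 1 - Fprim f y)) {y..1}"
    using assms by (intro has_integral_real_derivative) (auto intro: Fprim_has_derivative)
  then show ?thesis using Fprim_1 by simp
qed

text \<open>This is where f'(1) > 0 enters: the bound makes the integrand of I1 continuous at
y = 1, where 1 - f^2 vanishes.\<close>
lemma Fprim_bound_near_1:
  obtains y0 where "y0 < 1" "\<And>y. y \<in> {y0..1} \<Longrightarrow> 0 \<le> - Fprim f y \<and> - Fprim f y \<le> 1 - f y"
proof -
  have "(fder f \<longlongrightarrow> fder f 1) (at 1 within {-1..1})"
    using FF_fder_continuous_on by (simp add: continuous_on_def)
  from order_tendstoD(1)[OF this FF_endpoints(3)]
  obtain d where "d > 0" and d: "\<And>s. s \<in> {-1..1} \<Longrightarrow> s \<noteq> 1 \<Longrightarrow> dist s 1 < d \<Longrightarrow> 0 < fder f s"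
    unfolding eventually_at by blast
  define y0 where "y0 = max 0 (1 - d/2)"
  have fder_nonneg: "0 \<le> fder f s" if "s \<in> {y0..1}" for s
    using d[of s] that \<open>d > 0\<close> FF_endpoints(3) unfolding y0_def dist_real_def
    by (cases "s = 1") auto
  have "0 \<le> - Fprim f y \<and> - Fprim f y \<le> 1 - f y" if y: "y \<in> {y0..1}" for y
  proof
    have "0 \<le> y0" "y \<in> {-1..1}" using y unfolding y0_def by auto
    note tail = Fprim_tail_has_integral[OF \<open>y \<in> {-1..1}\<close>]
    show "0 \<le> - Fprim f y"
      by (rule has_integral_nonneg[OF tail]) (use fder_nonneg \<open>0 \<le> y0\<close> y in auto)
    have "(fder f has_integral (f 1 - f y)) {y..1}"
      using \<open>y \<in> {-1..1}\<close> by (intro has_integral_real_derivative) (auto intro: FF_has_derivative)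
    moreover have "fder f s * s \<le> fder f s" if "s \<in> {y..1}" for s
      using fder_nonneg[of s] that y by (simp add: mult_left_le)
    ultimately have "- Fprim f y \<le> f 1 - f y"
      using has_integral_le[OF tail] by blast
    then show "- Fprim f y \<le> 1 - f y" using FF_endpoints by simp
  qed
  moreover have "y0 < 1" unfolding y0_def using \<open>d > 0\<close> by simp
  ultimately show ?thesis using that by blast
qed

lemma FF_gt_minus_1: "y \<in> {0..1} \<Longrightarrow> -1 < f y"
  using FF_abs_less_1[of y] FF_endpoints by (cases "y = 1") auto

lemma FF_one_minus_sq_nonneg: "y \<in> {-1..1} \<Longrightarrow> 0 \<le> 1 - (f y)\<^sup>2"
  using FF_abs_le_1 by (simp add: abs_square_le_1)

lemma FF_one_minus_sq_pos: "y \<in> {-1<..<1} \<Longrightarrow> 0 < 1 - (f y)\<^sup>2"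
  using FF_abs_less_1 by (simp add: abs_square_less_1)

lemma I1_integrand_tendsto_0:
  "((\<lambda>y. (Fprim f y)\<^sup>2 / (1 - (f y)\<^sup>2)) \<longlongrightarrow> 0) (at 1 within {0..1})"
proof -
  obtain y0 where "y0 < 1" and bound: "\<And>y. y \<in> {y0..1} \<Longrightarrow> 0 \<le> - Fprim f y \<and> - Fprim f y \<le> 1 - f y"
    using Fprim_bound_near_1 by blast
  have "(f \<longlongrightarrow> f 1) (at 1 within {0..1})"
    using continuous_on_subset[OF FF_continuous_on] by (auto simp: continuous_on_def)
  then have "((\<lambda>y. (1 - f y) / (1 + f y)) \<longlongrightarrow> (1 - f 1) / (1 + f 1)) (at 1 within {0..1})"
    using FF_endpoints by (intro tendsto_intros) auto
  then have lim: "((\<lambda>y. (1 - f y) / (1 + f y)) \<longlongrightarrow> 0) (at 1 within {0..1})"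
    using FF_endpoints by simp
  have "eventually (\<lambda>y. y \<in> {max 0 y0..1}) (at 1 within {0..1::real})"
    unfolding eventually_at using \<open>y0 < 1\<close>
    by (intro exI[of _ "1 - max 0 y0"]) (auto simp: dist_real_def)
  then have "eventually (\<lambda>y. 0 \<le> (Fprim f y)\<^sup>2 / (1 - (f y)\<^sup>2)
      \<and> (Fprim f y)\<^sup>2 / (1 - (f y)\<^sup>2) \<le> (1 - f y) / (1 + f y)) (at 1 within {0..1})"
  proof eventually_elim
    case (elim y)
    then have "-1 < f y" "0 \<le> 1 - (f y)\<^sup>2" "0 \<le> - Fprim f y" "- Fprim f y \<le> 1 - f y"
      using FF_gt_minus_1[of y] FF_one_minus_sq_nonneg[of y] bound[of y] by auto
    then show ?case using sq_div_one_minus_sq_le[of "- Fprim f y" "f y"] by simp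
  qed
  then show ?thesis
    by (intro tendsto_sandwich[OF _ _ tendsto_const lim]) (auto elim: eventually_mono)
qed

lemma I1_integrand_continuous_on:
  "continuous_on {0..1} (\<lambda>y. (Fprim f y)\<^sup>2 / (1 - (f y)\<^sup>2))"
  unfolding continuous_on_eq_continuous_within
proof
  fix y :: real
  assume y: "y \<in> {0..1}"
  show "continuous (at y within {0..1}) (\<lambda>y. (Fprim f y)\<^sup>2 / (1 - (f y)\<^sup>2))"
  proof (cases "y = 1")
    case False
    then have "1 - (f y)\<^sup>2 \<noteq> 0" using FF_one_minus_sq_pos[of y] y by auto
    moreover have "continuous (at y within {0..1}) f" "continuous (at y within {0..1}) (Fprim f)"
      using continuous_on_subset[OF FF_continuous_on] continuous_on_subset[OF Fprim_continuous_on] y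
      by (auto simp: continuous_on_eq_continuous_within)
    ultimately show ?thesis by (intro continuous_intros)
  qed (use I1_integrand_tendsto_0 Fprim_1 in \<open>simp add: continuous_within\<close>)
qed

lemma I1_has_integral: "((\<lambda>y. (Fprim f y)\<^sup>2 / (1 - (f y)\<^sup>2)) has_integral I1 f) {0..1}"
  unfolding I1_def using I1_integrand_continuous_on
  by (simp add: integrable_continuous_interval has_integral_integrable_integral)

lemma I0_has_integral: "((\<lambda>y. 1 - (f y)\<^sup>2) has_integral I0 f) {0..1}"
proof -
  have "continuous_on {0..1} (\<lambda>y. 1 - (f y)\<^sup>2)"
    by (intro continuous_intros continuous_on_subset[OF FF_continuous_on]) auto
  then show ?thesis
    unfolding I0_def by (simp add: integrable_continuous_interval has_integral_integrable_integral)
qed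

lemma I1_nonneg: "0 \<le> I1 f"
proof (rule has_integral_nonneg[OF I1_has_integral])
  show "0 \<le> (Fprim f y)\<^sup>2 / (1 - (f y)\<^sup>2)" if "y \<in> {0..1}" for y
    using FF_one_minus_sq_nonneg[of y] that by simp
qed

lemma I0_nonneg: "0 \<le> I0 f"
proof (rule has_integral_nonneg[OF I0_has_integral])
  show "0 \<le> 1 - (f y)\<^sup>2" if "y \<in> {0..1}" for y
    using FF_one_minus_sq_nonneg[of y] that by simp
qed

lemma I2_pos: "0 < I2 f"
proof -
  have "0 \<le> I2 f"
    by (rule has_integral_nonneg[OF I2_has_integral]) (use FF_abs_le_1 in \<open>auto simp: abs_le_iff\<close>)
  moreover have "I2 f \<noteq> 0"
  proof
    assume "I2 f = 0"
    have "continuous_on {0..1} (\<lambda>y. (1 - f y) * y)"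
      by (intro continuous_intros continuous_on_subset[OF FF_continuous_on]) auto
    then have "(1 - f (1/2)) * (1/2) = 0"
      using I2_has_integral \<open>I2 f = 0\<close> FF_abs_le_1
      by (intro has_integral_0_cbox_imp_0[of 0 1 "\<lambda>y. (1 - f y) * y"]) (auto simp: abs_le_iff)
    then show False using FF_abs_less_1[of "1/2"] by simp
  qed
  ultimately show ?thesis by simp
qed

text \<open>Cauchy-Schwarz for int F = int (F / sqrt phi) sqrt phi with phi = 1 - f^2, in the
form -2 F <= a F^2/phi + phi/a for all a > 0.\<close>
lemma I2_sq_le_I1_mult_I0: "4 * (I2 f)\<^sup>2 \<le> I1 f * I0 f"
proof -
  have "4 * I2 f \<le> a * I1 f + I0 f / a" if "a > 0" for a
  proof -
    have "-2 * (-2 * I2 f) \<le> a * I1 f + I0 f / a"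
    proof (rule has_integral_le[OF has_integral_mult_right[OF Fprim_has_integral]
          has_integral_add[OF has_integral_mult_right[OF I1_has_integral] has_integral_divide[OF I0_has_integral]]])
      fix y :: real
      assume y: "y \<in> {0..1}"
      show "-2 * Fprim f y \<le> a * ((Fprim f y)\<^sup>2 / (1 - (f y)\<^sup>2)) + (1 - (f y)\<^sup>2) / a"
      proof (cases "y = 1")
        case False
        then have "0 < 1 - (f y)\<^sup>2" using FF_one_minus_sq_pos[of y] y by auto
        then show ?thesis using \<open>a > 0\<close> by (rule minus_2_mult_le_scaled_sum)
      qed (simp add: Fprim_1 FF_endpoints)
    qed
    then show ?thesis by simp
  qed
  then have "(4 * I2 f)\<^sup>2 \<le> 4 * I1 f * I0 f"
    using I2_pos I1_nonneg I0_nonneg by (intro sq_le_4_mult_if_le_scaled_sum) auto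
  then show ?thesis by (simp add: power_mult_distrib mult.assoc)
qed

lemma clip_gap_has_integral:
  assumes "0 < t"
  shows "((\<lambda>y. 2/t * ((1 - f y) * y) + (max 0 (1 - y/t))\<^sup>2 - (1 - (f y)\<^sup>2)) has_integral
    (2/t * I2 f + t/3 * (1 - (max 0 (1 - 1/t)) ^ 3) - I0 f)) {0..1}"
  using assms
  by (intro has_integral_diff has_integral_add has_integral_mult_right I2_has_integral
      clip_sq_has_integral I0_has_integral)

lemma clip_gap_integrand_nonneg:
  "0 < t \<Longrightarrow> y \<in> {0..1} \<Longrightarrow> 0 \<le> 2/t * ((1 - f y) * y) + (max 0 (1 - y/t))\<^sup>2 - (1 - (f y)\<^sup>2)"
  using FF_abs_le_1[of y] by (intro clip_gap_nonneg) auto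

lemma I0_le_clip_integral:
  "0 < t \<Longrightarrow> I0 f \<le> 2/t * I2 f + t/3 * (1 - (max 0 (1 - 1/t)) ^ 3)"
  using has_integral_nonneg[OF clip_gap_has_integral] clip_gap_integrand_nonneg by force

lemma I0_le_I2_bound:
  assumes "0 < t"
  shows "I0 f \<le> 2/t * I2 f + t/3"
proof -
  note I0_le_clip_integral[OF assms]
  moreover have "0 \<le> t/3 * (max 0 (1 - 1/t)) ^ 3" using assms by simp
  ultimately show ?thesis by (simp add: algebra_simps)
qed

lemma I0_eq_I2_bound_imp_id:
  assumes "0 < t" "I0 f = 2/t * I2 f + t/3" "y \<in> {0..1}"
  shows "f y = y"
proof -
  define gap where "gap y = 2/t * ((1 - f y) * y) + (max 0 (1 - y/t))\<^sup>2 - (1 - (f y)\<^sup>2)" for y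
  have "t/3 * (max 0 (1 - 1/t)) ^ 3 \<le> 0"
    using I0_le_clip_integral[OF assms(1)] assms(2) by (simp add: algebra_simps)
  moreover have "0 \<le> t/3 * (max 0 (1 - 1/t)) ^ 3" using assms(1) by simp
  ultimately have "2/t * I2 f + t/3 * (1 - (max 0 (1 - 1/t)) ^ 3) - I0 f = 0"
    using assms(2) by (simp add: algebra_simps)
  from clip_gap_has_integral[OF assms(1), unfolded this]
  have "(gap has_integral 0) {0..1}" unfolding gap_def .
  moreover have "continuous_on {0..1} gap"
    unfolding gap_def by (intro continuous_intros continuous_on_subset[OF FF_continuous_on]) (use assms(1) in auto)
  moreover have "0 \<le> gap y" if "y \<in> {0..1}" for y
    using clip_gap_integrand_nonneg[OF assms(1) that] unfolding gap_def .
  ultimately have gap_0: "gap y = 0" if "y \<in> {0..1}" for y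
    using that by (intro has_integral_0_cbox_imp_0[of 0 1 gap]) auto
  have "1 \<le> t"
  proof (rule ccontr)
    assume "\<not> 1 \<le> t"
    define z where "z = (1 + t) / 2"
    have "t < z" "z \<in> {-1<..<1}" "z \<in> {0..1}" using \<open>\<not> 1 \<le> t\<close> assms(1) by (auto simp: z_def)
    moreover have "2 < 2 * z/t" using \<open>t < z\<close> assms(1) by (simp add: field_simps)
    ultimately have "0 < (1 - f z) * (2 * z/t - 1 - f z)"
      using FF_abs_less_1[of z] by (intro mult_pos_pos) (auto simp: abs_less_iff)
    moreover have "gap z = (1 - f z) * (2 * z/t - 1 - f z)"
      unfolding gap_def by (rule clip_gap_eq(2)[OF assms(1) \<open>t < z\<close>])
    ultimately show False using gap_0[OF \<open>z \<in> {0..1}\<close>] by simp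
  qed
  have on_01: "f z = z/t" if "z \<in> {0..1}" for z
  proof -
    have "z \<le> t" using that \<open>1 \<le> t\<close> by simp
    then have "gap z = (f z - z/t)\<^sup>2" unfolding gap_def by (rule clip_gap_eq(1)[OF assms(1)])
    then show ?thesis using gap_0[OF that] by simp
  qed
  have "t = 1" using on_01[of 1] FF_endpoints(1) assms(1) by (simp add: field_simps)
  then show ?thesis using on_01[OF assms(3)] by simp
qed

lemma I0_sq_le: "(I0 f)\<^sup>2 \<le> 8/3 * I2 f"
proof -
  have "I0 f \<le> a * I2 f + (2/3) / a" if "0 < a" for a
    using I0_le_I2_bound[of "2/a"] that by (simp add: field_simps)
  then have "(I0 f)\<^sup>2 \<le> 4 * I2 f * (2/3)"
    using I0_nonneg I2_pos by (intro sq_le_4_mult_if_le_scaled_sum) auto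
  then show ?thesis by simp
qed

lemma I2_pow4_le_I1_I0: "16 * (I2 f)^4 \<le> (I1 f)\<^sup>2 * (I0 f)\<^sup>2"
proof -
  have "(4 * (I2 f)\<^sup>2)\<^sup>2 \<le> (I1 f * I0 f)\<^sup>2"
    using I2_sq_le_I1_mult_I0 by (intro power_mono) auto
  then show ?thesis by (simp add: power_mult_distrib flip: power_mult)
qed

lemma I2_cube_le_I1_sq: "6 * (I2 f)^3 \<le> (I1 f)\<^sup>2"
proof -
  have "8/3 * I2 f * (6 * (I2 f)^3) = 16 * (I2 f)^4" by (simp add: power_numeral_reduce)
  also have "\<dots> \<le> (I1 f)\<^sup>2 * (8/3 * I2 f)"
    using order_trans[OF I2_pow4_le_I1_I0 mult_left_mono[OF I0_sq_le zero_le_power2]] .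
  also have "\<dots> = 8/3 * I2 f * (I1 f)\<^sup>2" by simp
  finally show ?thesis by (rule mult_left_le_imp_le) (use I2_pos in simp)
qed

lemma I1_sq_eq_imp_id:
  assumes "(I1 f)\<^sup>2 = 6 * (I2 f)^3" "y \<in> {-1..1}"
  shows "f y = y"
proof -
  define m where "m = I2 f"
  have "0 < m" using I2_pos by (simp add: m_def)
  have "(I1 f)\<^sup>2 * (8/3 * m) = 16 * m^4" using assms(1) by (simp add: m_def power_numeral_reduce)
  also have "\<dots> \<le> (I1 f)\<^sup>2 * (I0 f)\<^sup>2" using I2_pow4_le_I1_I0 by (simp add: m_def)
  finally have "8/3 * m \<le> (I0 f)\<^sup>2"
    using assms(1) \<open>0 < m\<close> by (simp add: m_def mult_le_cancel_left_pos)
  then have I0_sq: "(I0 f)\<^sup>2 = 8/3 * m" using I0_sq_le by (simp add: m_def)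
  define t where "t = sqrt (6 * m)" \<comment> \<open>the minimiser of 2m/t + t/3\<close>
  have "0 < t" "t\<^sup>2 = 6 * m" using \<open>0 < m\<close> by (auto simp: t_def)
  then have "2/t * m + t/3 = 2 * t/3" "(2 * t/3)\<^sup>2 = 8/3 * m"
    by (auto simp: field_simps power2_eq_square)
  then have "(I0 f)\<^sup>2 = (2 * t/3)\<^sup>2" using I0_sq by simp
  then have "I0 f = 2 * t/3" using I0_nonneg \<open>0 < t\<close> by simp
  then have "I0 f = 2/t * I2 f + t/3" using \<open>2/t * m + t/3 = 2 * t/3\<close> by (simp add: m_def)
  then have on_01: "f y = y" if "y \<in> {0..1}" for y
    using I0_eq_I2_bound_imp_id[OF \<open>0 < t\<close>] that by blast
  show ?thesis
  proof (cases "0 \<le> y")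
    case False
    then show ?thesis using on_01[of "-y"] FF_odd[of y] assms(2) by auto
  qed (use on_01 assms(2) in auto)
qed

end

lemma fder_id: "y \<in> {-1..1} \<Longrightarrow> fder id y = 1"
  unfolding fder_def id_def by (rule vector_derivative_at_within_ivl) auto

lemma id_FF: "id \<in> FF"
proof -
  have "continuous_on {-1..1} (fder id)"
    by (rule continuous_on_eq[OF continuous_on_const[of _ 1]]) (simp add: fder_id)
  moreover have "\<forall>y\<in>{-1..1}. id differentiable (at y within {-1..1})"
    unfolding id_def by simp
  ultimately show ?thesis unfolding FF_def C1_on_interval_def by (auto simp: fder_id)
qed

lemma Fprim_id: "y \<in> {-1..1} \<Longrightarrow> Fprim id y = (y\<^sup>2 - 1) / 2"
proof -
  assume y: "y \<in> {-1..1}"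
  have "integral {-1..y} (\<lambda>s. fder id s * s) = integral {-1..y} (\<lambda>s. s)"
    by (rule integral_cong) (use y in \<open>auto simp: fder_id\<close>)
  also have "\<dots> = (y\<^sup>2 - 1) / 2" using ident_has_integral[of "-1" y] y by (simp add: integral_unique)
  finally show ?thesis unfolding Fprim_def .
qed

lemma I1_id: "I1 id = 1/6"
proof -
  have "((\<lambda>y::real. (1 - y\<^sup>2) / 4) has_integral ((1 - 1^3/3)/4 - (0 - 0^3/3)/4)) {0..1}"
    by (rule has_integral_real_derivative[of 0 1 "\<lambda>y. (y - y^3/3)/4"])
      (auto intro!: derivative_eq_intros simp: power2_eq_square)
  then have "((\<lambda>y::real. (1 - y\<^sup>2) / 4) has_integral (1/6)) {0..1}" by simp
  moreover have "(1 - y\<^sup>2) / 4 = (Fprim id y)\<^sup>2 / (1 - (id y)\<^sup>2)" if "y \<in> {0..1}" for y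
  proof (cases "y = 1")
    case False
    then have "1 - y\<^sup>2 \<noteq> 0" using that by (simp add: abs_square_eq_1)
    then show ?thesis using that by (simp add: Fprim_id field_simps power2_eq_square)
  qed (simp add: Fprim_id)
  ultimately show ?thesis unfolding I1_def by (metis (no_types, lifting) has_integral_eq integral_unique)
qed

lemma I2_id: "I2 id = 1/6"
proof -
  have "((\<lambda>y::real. (1 - y) * y) has_integral ((1^2/2 - 1^3/3) - (0^2/2 - 0^3/3))) {0..1}"
    by (rule has_integral_real_derivative[of 0 1 "\<lambda>y. y^2/2 - y^3/3"])
      (auto intro!: derivative_eq_intros simp: power2_eq_square field_simps)
  then show ?thesis unfolding I2_def by (simp add: integral_unique)
qed

lemma I1_sq_eq_imp_values:
  assumes "f \<in> FF" "(I1 f)\<^sup>2 = 6 * (I2 f)^3"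
  shows "I2 f = 1/6" "I1 f = 1/6"
proof -
  show "I2 f = 1/6"
    unfolding I2_id[symmetric] I2_def using I1_sq_eq_imp_id[OF assms] by (intro integral_cong) auto
  then have "(I1 f)\<^sup>2 = (1/6)\<^sup>2"
    using assms(2) unfolding \<open>I2 f = 1/6\<close> by (simp add: power2_eq_square power3_eq_cube)
  then show "I1 f = 1/6" using I1_nonneg[OF assms(1)] by simp
qed

lemma cubic_lower_bound:
  fixes k m P c :: real
  assumes "0 < k" "0 < m" "0 \<le> P" "6 * m^3 \<le> P\<^sup>2" "0 \<le> c"
  shows "- (k^3) / 81 \<le> c^3 * P / 2 - c\<^sup>2 * k * m / 2"
    and "c^3 * P / 2 - c\<^sup>2 * k * m / 2 = - (k^3) / 81 \<Longrightarrow> P\<^sup>2 = 6 * m^3 \<and> c^3 * P = 4 * k^3 / 81"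
proof -
  define X Y Z where "X = c\<^sup>2 * k * m" and "Y = c^3 * P" and "Z = 2 * k^3 / 81"
  have "0 \<le> X" "0 \<le> Y" "0 < Z" using assms by (simp_all add: X_def Y_def Z_def)
  have gap: "27 * Y\<^sup>2 * Z - 4 * X^3 = 4 * c^6 * k^3 * (P\<^sup>2 / 6 - m^3)"
    unfolding X_def Y_def Z_def by (simp add: algebra_simps flip: power_mult)
  have "0 \<le> 4 * c^6 * k^3 * (P\<^sup>2 / 6 - m^3)" using assms by simp
  then have XYZ: "4 * X^3 \<le> 27 * Y\<^sup>2 * Z" using gap by linarith
  also have "\<dots> \<le> 4 * (Y + Z)^3" using amgm_sq_cube(1) \<open>0 \<le> Y\<close> \<open>0 < Z\<close> by simp
  finally have "X \<le> Y + Z"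
    using power_le_imp_le_base[of X 2 "Y + Z"] \<open>0 \<le> Y\<close> \<open>0 < Z\<close> by (simp add: numeral_3_eq_3)
  moreover have J: "c^3 * P / 2 - c\<^sup>2 * k * m / 2 = (Y - X) / 2" "- (k^3) / 81 = - Z / 2"
    by (simp_all add: X_def Y_def Z_def)
  ultimately show "- (k^3) / 81 \<le> c^3 * P / 2 - c\<^sup>2 * k * m / 2" by simp
  assume "c^3 * P / 2 - c\<^sup>2 * k * m / 2 = - (k^3) / 81"
  then have "X = Y + Z" using J by simp
  then have "27 * Y\<^sup>2 * Z = 4 * (Y + Z)^3" and "4 * X^3 = 27 * Y\<^sup>2 * Z"
    using XYZ amgm_sq_cube(1) \<open>0 \<le> Y\<close> \<open>0 < Z\<close> by (auto intro: antisym)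
  then have "Y = 2 * Z" and "4 * c^6 * k^3 * (P\<^sup>2 / 6 - m^3) = 0"
    using amgm_sq_cube(2) \<open>0 \<le> Y\<close> \<open>0 < Z\<close> gap by auto
  moreover have "c \<noteq> 0" using \<open>X = Y + Z\<close> \<open>0 \<le> Y\<close> \<open>0 < Z\<close> by (auto simp: X_def Y_def Z_def)
  ultimately show "P\<^sup>2 = 6 * m^3 \<and> c^3 * P = 4 * k^3 / 81" using assms(1) by (simp add: X_def Y_def Z_def)
qed

theorem lemma4p3:
  fixes g A :: real
  assumes "g > 0" and "0 < A" and "A < 1"
  shows "id \<in> FF \<and>
    (\<forall>f\<in>FF. \<forall>c\<ge>0. Jt g A id (2/3 * g * A) \<le> Jt g A f c \<and>
       (Jt g A f c = Jt g A id (2/3 * g * A) \<longrightarrow>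
          (\<forall>y\<in>{-1..1}. f y = y) \<and> c = 2/3 * g * A))"
proof -
  define k where "k = g * A"
  have "0 < k" using assms by (simp add: k_def)
  have J: "Jt g A f c = c^3 * I1 f / 2 - c\<^sup>2 * k * I2 f / 2" for f c
    by (simp add: Jt_def k_def)
  have J_id: "Jt g A id (2/3 * g * A) = - (k^3) / 81"
    by (simp add: J I1_id I2_id k_def power_mult_distrib power2_eq_square power3_eq_cube)
  have "Jt g A id (2/3 * g * A) \<le> Jt g A f c \<and>
      (Jt g A f c = Jt g A id (2/3 * g * A) \<longrightarrow> (\<forall>y\<in>{-1..1}. f y = y) \<and> c = 2/3 * g * A)"
    if f: "f \<in> FF" and "0 \<le> c" for f c
  proof -
    note bound = cubic_lower_bound[OF \<open>0 < k\<close> I2_pos[OF f] I1_nonneg[OF f] I2_cube_le_I1_sq[OF f] \<open>0 \<le> c\<close>]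
    have "(\<forall>y\<in>{-1..1}. f y = y) \<and> c = 2/3 * g * A" if "Jt g A f c = Jt g A id (2/3 * g * A)"
    proof -
      have eq: "(I1 f)\<^sup>2 = 6 * (I2 f)^3" and c3: "c^3 * I1 f = 4 * k^3 / 81"
        using bound(2) that unfolding J_id J[of f c] by auto
      have "c^3 = (2/3 * k)^3"
        using c3 unfolding I1_sq_eq_imp_values(2)[OF f eq] by (simp add: power3_eq_cube field_simps)
      then have "c = 2/3 * k" using \<open>0 \<le> c\<close> \<open>0 < k\<close> by (simp add: power_eq_iff_eq_base)
      with I1_sq_eq_imp_id[OF f eq] show ?thesis by (simp add: k_def)
    qed
    with bound(1) show ?thesis unfolding J_id J[of f c] by simp
  qed
  with id_FF show ?thesis by blast
qed

end
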